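(* Let $q$ be an odd prime power and let $P(q^2)$ be the Paley graph on $\mathbb{F}_{q^2}$, with non-principal eigenvalues $\lambda_1=\frac{-1+q}{2}$ and $\lambda_2=\frac{-1-q}{2}$. For each $i\in\{1,2\}$, the minimum cardinality of the support of a $\lambda_i$-eigenfunction of $P(q^2)$ equals $q+1$. *)

theory Defs
  imports Complex_Main "HOL-Computational_Algebra.Primes"
begin

definition paley_adj :: "'a::field \<Rightarrow> 'a \<Rightarrow> bool" where
  "paley_adj x y \<longleftrightarrow> (\<exists>z. z \<noteq> 0 \<and> x - y = z * z)"

definition paley_eigenfunction :: "('a::{field,finite} \<Rightarrow> real) \<Rightarrow> real \<Rightarrow> bool" where
  "paley_eigenfunction f l \<longleftrightarrow>
     f \<noteq> (\<lambda>_. 0) \<and> (\<forall>x. (\<Sum>y\<in>{y. paley_adj x y}. f y) = l * f x)"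

definition supp_fun :: "('a \<Rightarrow> real) \<Rightarrow> 'a set" where
  "supp_fun f = {x. f x \<noteq> 0}"

end

theory Submission
  imports Defs "HOL-Computational_Algebra.Polynomial"
begin

text \<open>
  Lower bound: the Paley graph is regular, so an eigenfunction \<open>f\<close> for an eigenvalue
  \<open>l\<close> other than the degree sums to zero. At a point \<open>x\<^sub>0\<close> where \<open>\<bar>f\<bar>\<close> is maximal,
  \<open>f\<close> sums to \<open>l f x\<^sub>0\<close> over the neighbours and to \<open>-(1 + l) f x\<^sub>0\<close> over the other
  non-neighbours, so the support has at least \<open>1 + \<bar>l\<bar> + \<bar>1 + l\<bar> = q + 1\<close> points.

  Construction: let \<open>U = {u. u\<^sup>q\<^sup>+\<^sup>1 = 1}\<close> (\<open>circle\<close>) be the unit circle of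
  \<open>\<bbbF>\<^sub>q\<^sub>2\<close> over \<open>\<bbbF>\<^sub>q\<close>, a cyclic group of order \<open>q + 1\<close>, and \<open>\<eta>\<close>
  (\<open>circle_sign\<close>) its quadratic character. The Frobenius \<open>y \<mapsto> y\<^sup>q\<close> (\<open>frob\<close>)
  inverts \<open>U\<close>, so it maps \<open>u - v\<close> to \<open>-(u - v)/(u v)\<close>, and the quadratic character
  \<open>\<chi>\<close> of \<open>\<bbbF>\<^sub>q\<^sub>2\<close> satisfies \<open>\<chi>(u - v) = \<eta>(-1) \<eta>(u) \<eta>(v)\<close> for distinct
  \<open>u, v \<in> U\<close>. Hence \<open>f(c u) = \<eta>(u)\<close> (\<open>circle_function c\<close>), supported on \<open>c U\<close>,
  satisfies the eigenvalue equation at the points of \<open>c U\<close>, with eigenvalue \<open>(q - 1)/2\<close>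
  or \<open>-(q + 1)/2\<close> according to whether \<open>\<chi>(c) = \<eta>(-1)\<close>. At a point \<open>c x\<close> with
  \<open>x \<notin> U\<close>, the Moebius involution \<open>u \<mapsto> (u - x)/(x\<^sup>q u - 1)\<close> of \<open>U\<close>
  (\<open>circle_involution\<close>) preserves \<open>\<chi>(u - x)\<close> and, on the class \<open>\<chi>(u - x) \<noteq> \<eta>(-1)\<close>,
  has no fixed points and reverses \<open>\<eta>\<close>, so the sums of \<open>\<eta>\<close> over both classes vanish.
\<close>

lemma card_power_eq_le:
  assumes "m \<ge> 1"
  shows "card {x::'a::idom. x ^ m = c} \<le> m"
proof -
  have nonzero: "monom 1 m - [:c:] \<noteq> (0::'a poly)"
  proof
    assume "monom 1 m - [:c:] = (0::'a poly)"
    then have "coeff (monom 1 m - [:c:]) m = 0" by simp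
    then show False using assms by (cases m) (auto simp: coeff_monom)
  qed
  have "degree (monom 1 m - [:c:] :: 'a poly) \<le> m"
    by (rule degree_diff_le) (auto simp: degree_monom_le)
  moreover have "{x::'a. x ^ m = c} = {x. poly (monom 1 m - [:c:]) x = 0}"
    by (simp add: poly_monom)
  ultimately show ?thesis using card_poly_roots_bound[OF nonzero] by simp
qed

lemma card_le_mult_card_image:
  assumes "finite A" and "\<And>b. card {a\<in>A. g a = b} \<le> m"
  shows "card A \<le> m * card (g ` A)"
proof -
  have "A = (\<Union>b\<in>g ` A. {a\<in>A. g a = b})" by auto
  then have "card A \<le> (\<Sum>b\<in>g ` A. card {a\<in>A. g a = b})"
    by (metis card_UN_le assms(1) finite_imageI)
  also have "\<dots> \<le> (\<Sum>b\<in>g ` A. m)" by (intro sum_mono assms(2))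
  finally show ?thesis by (simp add: mult.commute)
qed

lemma mem_image_mult_iff:
  fixes c :: "'b::field"
  assumes "c \<noteq> 0"
  shows "y \<in> (\<lambda>u. c * u) ` A \<longleftrightarrow> y / c \<in> A"
proof
  assume "y \<in> (\<lambda>u. c * u) ` A"
  then show "y / c \<in> A" using assms by auto
next
  assume "y / c \<in> A"
  then show "y \<in> (\<lambda>u. c * u) ` A" using assms by (intro image_eqI[of _ _ "y / c"]) auto
qed

lemma abs_sum_le_card_supp_mult:
  fixes f :: "'a \<Rightarrow> real"
  assumes "finite A" and "\<And>y. \<bar>f y\<bar> \<le> m"
  shows "\<bar>\<Sum>y\<in>A. f y\<bar> \<le> real (card (A \<inter> supp_fun f)) * m"
proof -
  have "\<bar>\<Sum>y\<in>A. f y\<bar> \<le> (\<Sum>y\<in>A. \<bar>f y\<bar>)" by (rule sum_abs)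
  also have "\<dots> = (\<Sum>y\<in>A \<inter> supp_fun f. \<bar>f y\<bar>)"
    using assms(1) by (intro sum.mono_neutral_right) (auto simp: supp_fun_def)
  also have "\<dots> \<le> (\<Sum>y\<in>A \<inter> supp_fun f. m)" by (intro sum_mono assms(2))
  finally show ?thesis by simp
qed

lemma sum_eigenfunction_eq_0:
  fixes adj :: "'a::finite \<Rightarrow> 'a \<Rightarrow> bool" and f :: "'a \<Rightarrow> real"
  assumes regular: "\<And>y. card {x. adj x y} = k"
    and eigen: "\<And>x. (\<Sum>y\<in>{y. adj x y}. f y) = l * f x"
    and "l \<noteq> real k"
  shows "(\<Sum>x\<in>UNIV. f x) = 0"
proof -
  have "l * (\<Sum>x\<in>UNIV. f x) = (\<Sum>x\<in>UNIV. \<Sum>y\<in>{y. adj x y}. f y)"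
    by (simp add: sum_distrib_left eigen)
  also have "\<dots> = (\<Sum>y\<in>UNIV. \<Sum>x\<in>{x. adj x y}. f y)"
    using sum.swap_restrict[of UNIV UNIV "\<lambda>x y. f y" adj] by simp
  also have "\<dots> = real k * (\<Sum>y\<in>UNIV. f y)"
    by (simp add: regular sum_distrib_left mult.commute)
  finally show ?thesis using assms(3) by simp
qed

lemma regular_eigenfunction_card_supp_ge:
  fixes adj :: "'a::finite \<Rightarrow> 'a \<Rightarrow> bool" and f :: "'a \<Rightarrow> real"
  assumes irrefl: "\<And>x. \<not> adj x x"
    and regular: "\<And>y. card {x. adj x y} = k"
    and nonzero: "f \<noteq> (\<lambda>_. 0)"
    and eigen: "\<And>x. (\<Sum>y\<in>{y. adj x y}. f y) = l * f x"
    and "l \<noteq> real k"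
  shows "\<bar>l\<bar> + \<bar>1 + l\<bar> + 1 \<le> real (card (supp_fun f))"
proof -
  define m where "m = Max (range (\<lambda>y. \<bar>f y\<bar>))"
  have bound: "\<bar>f y\<bar> \<le> m" for y unfolding m_def by (rule Max_ge) auto
  have "m \<in> range (\<lambda>y. \<bar>f y\<bar>)" unfolding m_def by (rule Max_in) auto
  then obtain x0 where x0: "\<bar>f x0\<bar> = m" by auto
  have "m > 0"
  proof -
    obtain y where "f y \<noteq> 0" using nonzero by auto
    then show ?thesis using bound[of y] by auto
  qed
  define S where "S = supp_fun f"
  define N where "N = {y. adj x0 y}"
  define M where "M = - insert x0 N"
  have "x0 \<in> S" using x0 \<open>m > 0\<close> by (auto simp: S_def supp_fun_def)
  have "x0 \<notin> N" using irrefl by (simp add: N_def)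
  have "(\<Sum>y\<in>UNIV. f y) = f x0 + (\<Sum>y\<in>N. f y) + (\<Sum>y\<in>M. f y)"
  proof -
    have "(\<Sum>y\<in>UNIV. f y) = f x0 + (\<Sum>y\<in>UNIV - {x0}. f y)" by (simp add: sum.remove)
    also have "UNIV - {x0} = N \<union> M" using \<open>x0 \<notin> N\<close> by (auto simp: M_def)
    also have "(\<Sum>y\<in>N \<union> M. f y) = (\<Sum>y\<in>N. f y) + (\<Sum>y\<in>M. f y)"
      by (rule sum.union_disjoint) (auto simp: M_def)
    finally show ?thesis by simp
  qed
  then have sum_M: "(\<Sum>y\<in>M. f y) = - (1 + l) * f x0"
    using sum_eigenfunction_eq_0[OF regular eigen assms(5)] eigen[of x0]
    by (simp add: N_def algebra_simps)
  have "\<bar>l\<bar> * m \<le> real (card (N \<inter> S)) * m"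
    using abs_sum_le_card_supp_mult[of N f m] bound eigen[of x0] x0
    by (simp add: N_def S_def abs_mult)
  then have card_N: "\<bar>l\<bar> \<le> real (card (N \<inter> S))" using \<open>m > 0\<close> by simp
  have "\<bar>1 + l\<bar> * m \<le> real (card (M \<inter> S)) * m"
    using abs_sum_le_card_supp_mult[of M f m] bound sum_M x0
    by (simp add: S_def abs_mult abs_minus_commute add.commute)
  then have card_M: "\<bar>1 + l\<bar> \<le> real (card (M \<inter> S))" using \<open>m > 0\<close> by simp
  have "S = insert x0 (N \<inter> S \<union> M \<inter> S)" using \<open>x0 \<in> S\<close> by (auto simp: M_def)
  moreover have "card (insert x0 (N \<inter> S \<union> M \<inter> S)) = Suc (card (N \<inter> S \<union> M \<inter> S))"
    using \<open>x0 \<notin> N\<close> by (intro card_insert_disjoint) (auto simp: M_def)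
  moreover have "card (N \<inter> S \<union> M \<inter> S) = card (N \<inter> S) + card (M \<inter> S)"
    by (rule card_Un_disjoint) (auto simp: M_def)
  ultimately show ?thesis using card_N card_M by (simp add: S_def)
qed

lemma card_UNIV_field_ge_2: "2 \<le> card (UNIV :: 'a::{field,finite} set)"
proof -
  have "card {0, 1::'a} \<le> card (UNIV :: 'a set)" by (rule card_mono) auto
  then show ?thesis by simp
qed

lemma power_card_minus_one_eq_1:
  fixes x :: "'a::{field,finite}"
  assumes "x \<noteq> 0"
  shows "x ^ (card (UNIV :: 'a set) - 1) = 1"
proof -
  have "(\<Prod>y\<in>UNIV-{0}. x * y) = x ^ card (UNIV - {0::'a}) * \<Prod>(UNIV-{0::'a})"
    by (simp add: prod.distrib)
  also have "(\<Prod>y\<in>UNIV-{0}. x * y) = (\<Prod>y\<in>UNIV-{0::'a}. y)"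
    by (rule prod.reindex_bij_witness[of _ "\<lambda>y. y / x" "\<lambda>y. x * y"]) (use assms in auto)
  finally show ?thesis by (simp add: card_Diff_singleton)
qed

lemma power_card_UNIV_eq_self: "(x::'a::{field,finite}) ^ card (UNIV :: 'a set) = x"
proof (cases "x = 0")
  case False
  have "x ^ card (UNIV :: 'a set) = x * x ^ (card (UNIV :: 'a set) - 1)"
    using card_UNIV_field_ge_2[where 'a='a] by (simp flip: power_Suc)
  then show ?thesis using power_card_minus_one_eq_1[OF False] by simp
qed (use card_UNIV_field_ge_2[where 'a='a] in simp)

lemma of_nat_card_UNIV_eq_0: "of_nat (card (UNIV :: 'a::{field,finite} set)) = (0::'a)"
proof -
  have "(\<Sum>y\<in>UNIV. y + 1) = (\<Sum>y\<in>(UNIV::'a set). y)"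
    by (rule sum.reindex_bij_witness[of _ "\<lambda>y. y - 1" "\<lambda>y. y + 1"]) auto
  then show ?thesis by (simp add: sum.distrib)
qed

lemma prime_CHAR_finite_field: "prime CHAR('a::{field,finite})"
  by (intro prime_CHAR_semidom finite_imp_CHAR_pos) simp

definition nonzero_squares :: "'a::field set" where
  "nonzero_squares = {w. \<exists>z. z \<noteq> 0 \<and> w = z * z}"

lemma card_nonzero_squares_ge:
  "card (UNIV :: 'a::{field,finite} set) - 1 \<le> 2 * card (nonzero_squares :: 'a set)"
proof -
  have "card (UNIV - {0::'a}) \<le> 2 * card ((\<lambda>z. z * z) ` (UNIV - {0::'a}))"
  proof (rule card_le_mult_card_image)
    fix b :: 'a
    have "{a \<in> UNIV - {0}. a * a = b} \<subseteq> {x. x ^ 2 = b}" by (auto simp: power2_eq_square)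
    then show "card {a \<in> UNIV - {0}. a * a = b} \<le> 2"
      using card_power_eq_le[of 2 b] by (meson card_mono finite order_trans one_le_numeral)
  qed simp
  moreover have "(\<lambda>z. z * z) ` (UNIV - {0::'a}) = nonzero_squares"
    by (auto simp: nonzero_squares_def)
  ultimately show ?thesis by (simp add: card_Diff_singleton)
qed

text \<open>Euler's criterion serves as the definition, so the values \<open>\<plusminus>1\<close> lie in the field itself.\<close>
definition quadratic_char :: "'a::{field,finite} \<Rightarrow> 'a" where
  "quadratic_char x = x ^ ((card (UNIV :: 'a set) - 1) div 2)"

lemma quadratic_char_mult: "quadratic_char (x * y) = quadratic_char x * quadratic_char y"
  by (simp add: quadratic_char_def power_mult_distrib)

context
  assumes odd_card: "odd (card (UNIV :: 'a::{field,finite} set))"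
begin

lemma quadratic_char_square_eq_1:
  assumes "(x::'a) \<noteq> 0"
  shows "quadratic_char x * quadratic_char x = 1"
proof -
  have "(card (UNIV :: 'a set) - 1) div 2 + (card (UNIV :: 'a set) - 1) div 2
      = card (UNIV :: 'a set) - 1"
    using odd_card by presburger
  then show ?thesis
    using power_card_minus_one_eq_1[OF assms] by (simp add: quadratic_char_def flip: power_add)
qed

lemma quadratic_char_cases:
  assumes "(x::'a) \<noteq> 0"
  shows "quadratic_char x = 1 \<or> quadratic_char x = -1"
  using quadratic_char_square_eq_1[OF assms] square_eq_1_iff by blast

lemma card_quadratic_char_eq_1_le:
  "card {x::'a. quadratic_char x = 1} \<le> (card (UNIV :: 'a set) - 1) div 2"
proof -
  have "(card (UNIV :: 'a set) - 1) div 2 \<ge> 1"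
    using odd_card card_UNIV_field_ge_2[where 'a='a] by presburger
  then show ?thesis unfolding quadratic_char_def by (rule card_power_eq_le)
qed

lemma quadratic_char_eq_1_iff:
  assumes "(x::'a) \<noteq> 0"
  shows "quadratic_char x = 1 \<longleftrightarrow> x \<in> nonzero_squares"
proof -
  have "nonzero_squares \<subseteq> {x::'a. quadratic_char x = 1}"
    using quadratic_char_square_eq_1 by (auto simp: nonzero_squares_def quadratic_char_mult)
  moreover have "card {x::'a. quadratic_char x = 1} \<le> card (nonzero_squares :: 'a set)"
    using card_quadratic_char_eq_1_le card_nonzero_squares_ge[where 'a='a] by linarith
  ultimately have "nonzero_squares = {x::'a. quadratic_char x = 1}"
    by (metis card_mono card_subset_eq finite le_antisym)
  then show ?thesis using assms by auto
qed

lemma exists_quadratic_nonresidue: "\<exists>a::'a. a \<noteq> 0 \<and> quadratic_char a = -1"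
proof -
  have "card {x::'a. quadratic_char x = 1} < card (UNIV - {0::'a})"
    using card_quadratic_char_eq_1_le card_UNIV_field_ge_2[where 'a='a]
    by (simp add: card_Diff_singleton)
  then obtain a :: 'a where "a \<noteq> 0" "quadratic_char a \<noteq> 1"
    by (metis (mono_tags, lifting) Diff_iff card_mono finite mem_Collect_eq not_le singletonI subsetI)
  then show ?thesis using quadratic_char_cases by blast
qed

end

lemma card_paley_neighbours:
  "card {x::'a::{field,finite}. paley_adj x y} = card (nonzero_squares :: 'a set)"
proof -
  have "{x. paley_adj x y} = (\<lambda>w. w + y) ` nonzero_squares"
    by (auto simp: nonzero_squares_def paley_adj_def image_iff algebra_simps)
  then show ?thesis by (simp add: card_image)
qed

lemma paley_eigenfunction_card_supp_ge:
  fixes f :: "'a::{field,finite} \<Rightarrow> real"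
  assumes "paley_eigenfunction f l" and "l \<noteq> real (card (nonzero_squares :: 'a set))"
  shows "\<bar>l\<bar> + \<bar>1 + l\<bar> + 1 \<le> real (card (supp_fun f))"
  using assms card_paley_neighbours
  by (intro regular_eigenfunction_card_supp_ge[of paley_adj])
     (auto simp: paley_eigenfunction_def paley_adj_def)

locale paley_square_field =
  fixes q :: nat and field_type :: "'a::{field,finite} itself"
  assumes card_UNIV: "card (UNIV :: 'a set) = q\<^sup>2"
    and odd_q: "odd q"
    and prime_power: "\<exists>p k. prime p \<and> q = p ^ k"
begin

lemma card_UNIV_eq: "card (UNIV :: 'a set) = q * q"
  using card_UNIV by (simp add: power2_eq_square)

lemma odd_card_UNIV: "odd (card (UNIV :: 'a set))"
  using odd_q by (simp add: card_UNIV_eq)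

lemma q_ge_3: "q \<ge> 3"
proof -
  have "2 \<le> q * q" using card_UNIV_field_ge_2[where 'a='a] by (simp add: card_UNIV_eq)
  then have "q \<noteq> 0" "q \<noteq> 1" by (metis mult_0 not_numeral_le_zero, auto)
  then show ?thesis using odd_q by presburger
qed

lemma q_eq_CHAR_power: "\<exists>k. q = CHAR('a) ^ k"
proof -
  obtain p k where p: "prime p" and q: "q = p ^ k" using prime_power by blast
  have "CHAR('a) dvd p ^ (k + k)"
    using of_nat_card_UNIV_eq_0[where 'a='a] of_nat_eq_0_iff_char_dvd
    by (metis card_UNIV_eq q power_add)
  then have "CHAR('a) = p"
    using prime_CHAR_finite_field p by (meson prime_dvd_power primes_dvd_imp_eq)
  then show ?thesis using q by blast
qed

lemma minus_one_neq_one: "(-1::'a) \<noteq> 1"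
proof
  assume "(-1::'a) = 1"
  then have "of_nat 2 = (0::'a)" by (simp add: eq_neg_iff_add_eq_0)
  then have "CHAR('a) dvd 2" using of_nat_eq_0_iff_char_dvd by blast
  moreover have "odd CHAR('a)"
  proof -
    obtain k where "q = CHAR('a) ^ k" using q_eq_CHAR_power by blast
    then show ?thesis using odd_q q_ge_3 by (auto simp: even_power)
  qed
  ultimately show False
    using prime_CHAR_finite_field[where 'a='a]
    by (metis primes_dvd_imp_eq two_is_prime_nat even_numeral)
qed

definition frob :: "'a \<Rightarrow> 'a" where
  "frob x = x ^ q"

lemma frob_add: "frob (x + y) = frob x + frob y"
proof -
  obtain k where "q = CHAR('a) ^ k" using q_eq_CHAR_power by blast
  then show ?thesis
    unfolding frob_def by (intro freshmans_dream' prime_CHAR_finite_field)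
qed

lemma frob_diff: "frob (x - y) = frob x - frob y"
  using frob_add[of "x - y" y] by (simp add: algebra_simps)

lemma frob_mult: "frob (x * y) = frob x * frob y"
  by (simp add: frob_def power_mult_distrib)

lemma frob_divide: "frob (x / y) = frob x / frob y"
  by (simp add: frob_def power_divide)

lemma frob_0 [simp]: "frob 0 = 0" and frob_1 [simp]: "frob 1 = 1"
  using q_ge_3 by (simp_all add: frob_def)

lemma frob_minus_one [simp]: "frob (-1) = -1"
  using odd_q by (simp add: frob_def)

lemma frob_frob [simp]: "frob (frob x) = x"
  using power_card_UNIV_eq_self[of x] by (simp add: frob_def card_UNIV_eq flip: power_mult)

lemma frob_eq_0_iff [simp]: "frob x = 0 \<longleftrightarrow> x = 0"
  by (metis frob_0 frob_frob)

lemma q_mult_q_minus_1: "q * q - 1 = (q - 1) * (q + 1)"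
  using q_ge_3 by (cases q) (simp_all add: algebra_simps)

definition h :: nat where
  "h = (q + 1) div 2"

lemma two_mult_h: "2 * h = q + 1"
  using odd_q by (simp add: h_def)

lemma quadratic_char_eq_frob_ratio_power:
  assumes "y \<noteq> 0"
  shows "quadratic_char y = (frob y / y) ^ h"
proof -
  have "card (UNIV :: 'a set) - 1 = 2 * ((q - 1) * h)"
    by (metis card_UNIV_eq q_mult_q_minus_1 two_mult_h mult.left_commute)
  moreover have "frob y / y = y ^ (q - 1)"
    using assms q_ge_3 by (simp add: frob_def power_diff)
  ultimately show ?thesis by (simp add: quadratic_char_def power_mult)
qed

lemma quadratic_char_frob_fixed: "y \<noteq> 0 \<Longrightarrow> frob y = y \<Longrightarrow> quadratic_char y = 1"
  by (simp add: quadratic_char_eq_frob_ratio_power)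

lemma quadratic_char_uminus: "quadratic_char (- x) = quadratic_char (x::'a)"
proof -
  have "quadratic_char (-1 :: 'a) = 1" by (rule quadratic_char_frob_fixed) simp_all
  then show ?thesis by (metis quadratic_char_mult mult_minus1 mult_1)
qed

lemma paley_adj_iff_quadratic_char:
  "paley_adj (x::'a) y \<longleftrightarrow> y \<noteq> x \<and> quadratic_char (y - x) = 1"
proof -
  have "paley_adj x y \<longleftrightarrow> x - y \<in> nonzero_squares"
    by (simp add: paley_adj_def nonzero_squares_def)
  also have "\<dots> \<longleftrightarrow> x - y \<noteq> 0 \<and> quadratic_char (x - y) = 1"
  proof (cases "x - y = 0")
    case False
    then show ?thesis using quadratic_char_eq_1_iff[OF odd_card_UNIV False] by simp
  qed (simp add: nonzero_squares_def)
  finally show ?thesis using quadratic_char_uminus[of "y - x"] by auto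
qed

definition circle :: "'a set" where
  "circle = {u. frob u * u = 1}"

lemma circle_eq_roots: "circle = {u. u ^ (q + 1) = 1}"
  by (simp add: circle_def frob_def mult.commute)

lemma circle_nonzero: "u \<in> circle \<Longrightarrow> u \<noteq> 0"
  by (auto simp: circle_def)

lemma frob_circle: "u \<in> circle \<Longrightarrow> frob u = 1 / u"
  by (auto simp: circle_def eq_divide_eq)

lemma one_mem_circle: "1 \<in> circle"
  by (simp add: circle_def)

lemma minus_one_mem_circle: "-1 \<in> circle"
  by (simp add: circle_def)

lemma mult_mem_circle: "u * v \<in> circle" if "u \<in> circle" "v \<in> circle"
proof -
  have "frob (u * v) * (u * v) = (frob u * u) * (frob v * v)" by (simp add: frob_mult ac_simps)
  then show ?thesis using that unfolding circle_def mem_Collect_eq by (metis mult_1)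
qed

lemma divide_mem_circle: "u \<in> circle \<Longrightarrow> v \<in> circle \<Longrightarrow> u / v \<in> circle"
  by (simp add: circle_def frob_divide times_divide_times_eq)

lemma card_circle: "card circle = q + 1"
proof (rule antisym)
  show "card circle \<le> q + 1"
    unfolding circle_eq_roots by (rule card_power_eq_le) simp
next
  have "card (UNIV - {0::'a}) \<le> (q - 1) * card ((\<lambda>x. x ^ (q - 1)) ` (UNIV - {0::'a}))"
  proof (rule card_le_mult_card_image)
    fix b :: 'a
    have "{a \<in> UNIV - {0}. a ^ (q - 1) = b} \<subseteq> {x. x ^ (q - 1) = b}" by auto
    moreover have "card {x::'a. x ^ (q - 1) = b} \<le> q - 1"
      using q_ge_3 by (intro card_power_eq_le) simp
    ultimately show "card {a \<in> UNIV - {0}. a ^ (q - 1) = b} \<le> q - 1"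
      by (meson card_mono finite order_trans)
  qed simp
  also have "(\<lambda>x. x ^ (q - 1)) ` (UNIV - {0::'a}) \<subseteq> circle"
  proof
    fix y assume "y \<in> (\<lambda>x. x ^ (q - 1)) ` (UNIV - {0::'a})"
    then obtain x where "x \<noteq> 0" "y = x ^ (q - 1)" by auto
    moreover have "(x ^ (q - 1)) ^ (q + 1) = x ^ (card (UNIV :: 'a set) - 1)"
      by (simp only: card_UNIV_eq q_mult_q_minus_1 power_mult)
    ultimately show "y \<in> circle"
      using power_card_minus_one_eq_1 by (simp add: circle_eq_roots)
  qed
  then have "card ((\<lambda>x. x ^ (q - 1)) ` (UNIV - {0::'a})) \<le> card circle"
    by (simp add: card_mono)
  finally have "q * q - 1 \<le> (q - 1) * card circle"
    by (simp add: card_Diff_singleton card_UNIV_eq)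
  then have "(q - 1) * (q + 1) \<le> (q - 1) * card circle"
    by (simp only: q_mult_q_minus_1)
  then show "q + 1 \<le> card circle" using q_ge_3 by (subst (asm) mult_le_cancel1) simp
qed

definition circle_sign :: "'a \<Rightarrow> 'a" where
  "circle_sign u = u ^ h"

lemma circle_sign_square: "u \<in> circle \<Longrightarrow> circle_sign u * circle_sign u = 1"
  by (simp add: circle_sign_def circle_eq_roots two_mult_h flip: power_add mult_2)

lemma circle_sign_cases: "u \<in> circle \<Longrightarrow> circle_sign u = 1 \<or> circle_sign u = -1"
  using circle_sign_square square_eq_1_iff by blast

lemma circle_sign_mult: "circle_sign (u * v) = circle_sign u * circle_sign v"
  by (simp add: circle_sign_def power_mult_distrib)

lemma circle_sign_divide: "circle_sign (u / v) = circle_sign u / circle_sign v"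
  by (simp add: circle_sign_def power_divide)

lemma exists_circle_sign_eq_minus_one: "\<exists>t\<in>circle. circle_sign t = -1"
proof -
  have "card {u::'a. u ^ h = 1} \<le> h"
    using two_mult_h q_ge_3 by (intro card_power_eq_le) linarith
  moreover have "h < card circle" using two_mult_h card_circle by linarith
  ultimately have "\<not> circle \<subseteq> {u. u ^ h = 1}"
    by (metis card_mono finite leD le_trans)
  then obtain t where "t \<in> circle" "circle_sign t \<noteq> 1" by (auto simp: circle_sign_def)
  then show ?thesis using circle_sign_cases by blast
qed

lemma card_circle_sign_eq:
  assumes "s = 1 \<or> s = -1"
  shows "card {u\<in>circle. circle_sign u = s} = h"
proof -
  define A where "A = {u\<in>circle. circle_sign u = 1}"
  define B where "B = {u\<in>circle. circle_sign u = -1}"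
  obtain t where t: "t \<in> circle" "circle_sign t = -1"
    using exists_circle_sign_eq_minus_one by blast
  have "bij_betw (\<lambda>u. t * u) A B"
    by (rule bij_betw_byWitness[where f'="\<lambda>u. u / t"])
       (use t circle_nonzero in \<open>auto simp: A_def B_def mult_mem_circle divide_mem_circle
          circle_sign_mult circle_sign_divide\<close>)
  then have "card A = card B" by (rule bij_betw_same_card)
  have "circle = A \<union> B" using circle_sign_cases by (auto simp: A_def B_def)
  then have "card circle = card (A \<union> B)" by simp
  also have "\<dots> = card A + card B"
    using minus_one_neq_one by (intro card_Un_disjoint) (auto simp: A_def B_def)
  finally show ?thesis
    using \<open>card A = card B\<close> card_circle two_mult_h assms by (auto simp: A_def B_def)
qed

definition circle_sign_real :: "'a \<Rightarrow> real" where
  "circle_sign_real u = (if circle_sign u = 1 then 1 else -1)"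

lemma circle_sign_real_nonzero: "circle_sign_real u \<noteq> 0"
  by (simp add: circle_sign_real_def)

lemma circle_sign_real_opposite:
  "u \<in> circle \<Longrightarrow> circle_sign v = - circle_sign u \<Longrightarrow> circle_sign_real v = - circle_sign_real u"
  using circle_sign_cases[of u] minus_one_neq_one by (auto simp: circle_sign_real_def)

lemma sum_circle_sign_real: "(\<Sum>u\<in>circle. circle_sign_real u) = 0"
proof -
  define A where "A = {u\<in>circle. circle_sign u = 1}"
  define B where "B = {u\<in>circle. circle_sign u = -1}"
  have "circle = A \<union> B" using circle_sign_cases by (auto simp: A_def B_def)
  then have "(\<Sum>u\<in>circle. circle_sign_real u) = (\<Sum>u\<in>A \<union> B. circle_sign_real u)" by simp
  also have "\<dots> = (\<Sum>u\<in>A. circle_sign_real u) + (\<Sum>u\<in>B. circle_sign_real u)"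
    using minus_one_neq_one by (intro sum.union_disjoint) (auto simp: A_def B_def)
  also have "(\<Sum>u\<in>A. circle_sign_real u) = real (card A)"
    by (simp add: A_def circle_sign_real_def)
  also have "(\<Sum>u\<in>B. circle_sign_real u) = - real (card B)"
    using minus_one_neq_one by (simp add: B_def circle_sign_real_def)
  finally show ?thesis
    using card_circle_sign_eq[of 1] card_circle_sign_eq[of "-1"] by (simp add: A_def B_def)
qed

lemma quadratic_char_chord:
  assumes "u \<in> circle" "v \<in> circle" "u \<noteq> v"
  shows "quadratic_char (u - v) = circle_sign (-1) * circle_sign u * circle_sign v"
proof -
  have "u \<noteq> 0" "v \<noteq> 0" "u - v \<noteq> 0" using assms circle_nonzero by auto
  have "frob (u - v) = 1 / u - 1 / v" using assms by (simp add: frob_diff frob_circle)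
  also have "\<dots> = (-1 / (u * v)) * (u - v)"
    using \<open>u \<noteq> 0\<close> \<open>v \<noteq> 0\<close> by (simp add: field_simps)
  finally have "frob (u - v) / (u - v) = -1 / (u * v)"
    using \<open>u - v \<noteq> 0\<close> by simp
  then have "quadratic_char (u - v) = circle_sign (-1) / (circle_sign u * circle_sign v)"
    unfolding quadratic_char_eq_frob_ratio_power[OF \<open>u - v \<noteq> 0\<close>] circle_sign_def
    by (simp only: power_divide power_mult_distrib)
  also have "\<dots> = circle_sign (-1) * circle_sign u * circle_sign v"
    using circle_sign_cases[OF assms(1)] circle_sign_cases[OF assms(2)] by auto
  finally show ?thesis .
qed

definition circle_involution :: "'a \<Rightarrow> 'a \<Rightarrow> 'a" where
  "circle_involution x u = (u - x) / (frob x * u - 1)"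

context
  fixes x :: 'a
  assumes x_notin_circle: "x \<notin> circle"
begin

lemma neq_of_mem_circle: "u \<in> circle \<Longrightarrow> u \<noteq> x"
  using x_notin_circle by auto

lemma mult_frob_self_neq_1: "x * frob x \<noteq> 1"
  using x_notin_circle by (auto simp: circle_def mult.commute)

lemma frob_mult_neq_1:
  assumes "u \<in> circle"
  shows "frob x * u \<noteq> 1"
proof
  assume "frob x * u = 1"
  then have "frob x = frob u" using assms circle_nonzero by (simp add: frob_circle eq_divide_eq)
  then have "x = u" by (metis frob_frob)
  then show False using assms x_notin_circle by simp
qed

lemma frob_circle_involution:
  assumes "u \<in> circle"
  shows "frob (circle_involution x u) = (1 - frob x * u) / (x - u)"
proof -
  have "u \<noteq> 0" "frob x * u - 1 \<noteq> 0" "x - u \<noteq> 0"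
    using assms circle_nonzero frob_mult_neq_1 neq_of_mem_circle by auto
  then show ?thesis
    using assms
    by (simp add: circle_involution_def frob_divide frob_diff frob_mult frob_circle field_simps)
qed

lemma circle_involution_mem_circle:
  assumes "u \<in> circle"
  shows "circle_involution x u \<in> circle"
proof -
  have "frob x * u - 1 \<noteq> 0" "x - u \<noteq> 0"
    using assms frob_mult_neq_1 neq_of_mem_circle by auto
  moreover have "(1 - frob x * u) * (u - x) = (x - u) * (frob x * u - 1)"
    by (simp add: algebra_simps)
  ultimately have "frob (circle_involution x u) * circle_involution x u = 1"
    unfolding frob_circle_involution[OF assms] unfolding circle_involution_def by simp
  then show ?thesis by (simp add: circle_def)
qed

lemma circle_involution_diff_eq:
  assumes "u \<in> circle"
  shows "circle_involution x u - x = u * (1 - x * frob x) / (frob x * u - 1)"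
proof -
  have "frob x * u - 1 \<noteq> 0" using assms frob_mult_neq_1 by auto
  then show ?thesis by (simp add: circle_involution_def field_simps)
qed

lemma circle_involution_involution:
  assumes "u \<in> circle"
  shows "circle_involution x (circle_involution x u) = u"
proof -
  have "frob x * u - 1 \<noteq> 0" "1 - x * frob x \<noteq> 0"
    using assms frob_mult_neq_1 mult_frob_self_neq_1 by auto
  moreover have "frob x * circle_involution x u - 1 = (1 - x * frob x) / (frob x * u - 1)"
    using calculation by (simp add: circle_involution_def field_simps)
  ultimately show ?thesis
    using assms by (simp add: circle_involution_def[of x "circle_involution x u"] circle_involution_diff_eq)
qed

lemma frob_ratio_circle_involution:
  assumes "u \<in> circle"
  shows "frob (circle_involution x u - x) / (circle_involution x u - x) = frob (u - x) / (u - x)"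
proof -
  have nz: "u \<noteq> 0" "frob x * u - 1 \<noteq> 0" "1 - x * frob x \<noteq> 0" "x - u \<noteq> 0"
    using assms circle_nonzero frob_mult_neq_1 mult_frob_self_neq_1 neq_of_mem_circle by auto
  have frob_sub: "frob (circle_involution x u - x) = (1 - x * frob x) / (x - u)"
    unfolding frob_diff frob_circle_involution[OF assms] using nz by (simp add: field_simps)
  have frob_u_sub: "frob (u - x) = 1 / u - frob x" using assms by (simp add: frob_diff frob_circle)
  have "frob (circle_involution x u - x) / (circle_involution x u - x)
      = ((1 - x * frob x) * (frob x * u - 1)) / ((x - u) * (u * (1 - x * frob x)))"
    unfolding frob_sub unfolding circle_involution_diff_eq[OF assms] by (rule divide_divide_times_eq)
  also have "\<dots> = (1 - frob x * u) / (u * (u - x))"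
  proof -
    have "(x - u) * (u * (1 - x * frob x)) \<noteq> 0" "u * (u - x) \<noteq> 0" using nz by auto
    then show ?thesis by (simp add: frac_eq_eq algebra_simps)
  qed
  also have "\<dots> = frob (u - x) / (u - x)"
    unfolding frob_u_sub using nz by (simp add: field_simps)
  finally show ?thesis .
qed

lemma quadratic_char_circle_involution:
  assumes "u \<in> circle"
  shows "quadratic_char (circle_involution x u - x) = quadratic_char (u - x)"
proof -
  have "circle_involution x u - x \<noteq> 0" "u - x \<noteq> 0"
    using assms circle_involution_mem_circle neq_of_mem_circle by auto
  then show ?thesis
    using frob_ratio_circle_involution[OF assms] by (simp add: quadratic_char_eq_frob_ratio_power)
qed

lemma quadratic_char_at_fixed_point:
  assumes "u \<in> circle" and "circle_involution x u = u"
  shows "quadratic_char (u - x) = circle_sign (-1)"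
proof -
  have nz: "u \<noteq> 0" "frob x * u - 1 \<noteq> 0" "u - x \<noteq> 0"
    using assms circle_nonzero frob_mult_neq_1 neq_of_mem_circle by auto
  have "u - x = u * (frob x * u - 1)"
    using assms(2) nz by (simp add: circle_involution_def field_simps)
  then have "frob (u - x) / (u - x) = -1 / (u * u)"
    using nz assms by (simp add: frob_diff frob_circle field_simps)
  then have "quadratic_char (u - x) = circle_sign (-1) / (circle_sign u * circle_sign u)"
    unfolding quadratic_char_eq_frob_ratio_power[OF nz(3)] circle_sign_def
    by (simp only: power_divide power_mult_distrib)
  then show ?thesis using circle_sign_square[OF assms(1)] by simp
qed

lemma circle_sign_circle_involution:
  assumes "u \<in> circle" and "circle_involution x u \<noteq> u"
  shows "circle_sign (circle_involution x u)
    = circle_sign (-1) * quadratic_char (u - x) * circle_sign u"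
proof -
  define v where "v = circle_involution x u"
  have "v \<in> circle" using assms(1) circle_involution_mem_circle by (simp add: v_def)
  have nz: "v - x \<noteq> 0" "u - x \<noteq> 0"
    using \<open>v \<in> circle\<close> assms(1) neq_of_mem_circle by auto
  define z where "z = (v - x) / (u - x)"
  have "frob z = z"
    using frob_ratio_circle_involution[OF assms(1)] nz
    by (simp add: z_def v_def frob_divide field_simps)
  then have "frob (1 - z) = 1 - z" by (simp add: frob_diff)
  moreover have "1 - z \<noteq> 0" using assms(2) nz by (simp add: z_def v_def field_simps)
  moreover have "u - v = (u - x) * (1 - z)" using nz by (simp add: z_def field_simps)
  ultimately have "quadratic_char (u - v) = quadratic_char (u - x)"
    by (simp add: quadratic_char_mult quadratic_char_frob_fixed)
  moreover have "quadratic_char (u - v) = circle_sign (-1) * circle_sign u * circle_sign v"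
    using quadratic_char_chord[OF assms(1) \<open>v \<in> circle\<close>] assms(2) by (simp add: v_def)
  ultimately have chord: "circle_sign (-1) * circle_sign u * circle_sign v = quadratic_char (u - x)"
    by simp
  have "circle_sign v
      = (circle_sign (-1) * circle_sign (-1)) * (circle_sign u * circle_sign u) * circle_sign v"
    using circle_sign_square[OF assms(1)] circle_sign_square[OF minus_one_mem_circle] by simp
  also have "\<dots> = circle_sign (-1) * (circle_sign (-1) * circle_sign u * circle_sign v) * circle_sign u"
    by (simp add: ac_simps)
  also have "\<dots> = circle_sign (-1) * quadratic_char (u - x) * circle_sign u"
    by (simp only: chord)
  finally show ?thesis by (simp add: v_def)
qed

lemma sum_circle_sign_real_class_neq:
  assumes "d = 1 \<or> d = -1" and "d \<noteq> circle_sign (-1)"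
  shows "(\<Sum>u\<in>{u\<in>circle. quadratic_char (u - x) = d}. circle_sign_real u) = 0"
proof -
  define P where "P = {u\<in>circle. quadratic_char (u - x) = d}"
  have "bij_betw (circle_involution x) P P"
    by (rule bij_betw_byWitness[where f'="circle_involution x"])
       (auto simp: P_def circle_involution_involution circle_involution_mem_circle
          quadratic_char_circle_involution)
  then have "(\<Sum>u\<in>P. circle_sign_real u) = (\<Sum>u\<in>P. circle_sign_real (circle_involution x u))"
    by (simp add: sum.reindex_bij_betw)
  also have "\<dots> = (\<Sum>u\<in>P. - circle_sign_real u)"
  proof (rule sum.cong)
    fix u assume "u \<in> P"
    then have u: "u \<in> circle" "quadratic_char (u - x) = d" by (auto simp: P_def)
    then have "circle_involution x u \<noteq> u" using quadratic_char_at_fixed_point assms(2) by auto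
    moreover have "circle_sign (-1) * d = -1"
      using assms circle_sign_cases[OF minus_one_mem_circle] minus_one_neq_one by auto
    ultimately have "circle_sign (circle_involution x u) = - circle_sign u"
      using circle_sign_circle_involution u by simp
    then show "circle_sign_real (circle_involution x u) = - circle_sign_real u"
      by (rule circle_sign_real_opposite[OF u(1)])
  qed simp
  finally show ?thesis by (simp add: P_def sum_negf)
qed

lemma sum_circle_sign_real_class_off_circle:
  assumes "d = 1 \<or> d = -1"
  shows "(\<Sum>u\<in>{u\<in>circle. quadratic_char (u - x) = d}. circle_sign_real u) = 0"
proof (cases "d = circle_sign (-1)")
  case True
  define A where "A = {u\<in>circle. quadratic_char (u - x) = d}"
  define B where "B = {u\<in>circle. quadratic_char (u - x) = -d}"
  have "quadratic_char (u - x) = d \<or> quadratic_char (u - x) = -d" if "u \<in> circle" for u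
    using quadratic_char_cases[OF odd_card_UNIV, of "u - x"] neq_of_mem_circle[OF that] assms
    by auto
  then have "circle = A \<union> B" by (auto simp: A_def B_def)
  then have "0 = (\<Sum>u\<in>A \<union> B. circle_sign_real u)" using sum_circle_sign_real by simp
  also have "\<dots> = (\<Sum>u\<in>A. circle_sign_real u) + (\<Sum>u\<in>B. circle_sign_real u)"
    using assms minus_one_neq_one by (intro sum.union_disjoint) (auto simp: A_def B_def)
  also have "(\<Sum>u\<in>B. circle_sign_real u) = 0"
    unfolding B_def using True assms minus_one_neq_one
    by (intro sum_circle_sign_real_class_neq) auto
  finally show ?thesis by (simp add: A_def)
qed (use assms sum_circle_sign_real_class_neq in blast)

end

lemma sum_circle_sign_real_class_on_circle:
  assumes "x \<in> circle" and "d = 1 \<or> d = -1"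
  shows "(\<Sum>u\<in>{u\<in>circle. u \<noteq> x \<and> quadratic_char (u - x) = d}. circle_sign_real u)
    = (if d = circle_sign (-1) then (real h - 1) * circle_sign_real x else - real h * circle_sign_real x)"
proof -
  have class_eq: "{u\<in>circle. u \<noteq> x \<and> quadratic_char (u - x) = d}
      = {u\<in>circle. u \<noteq> x \<and> circle_sign u = circle_sign (-1) * d * circle_sign x}"
  proof (intro Collect_cong conj_cong refl)
    fix u assume "u \<in> circle" "u \<noteq> x"
    then have "quadratic_char (u - x) = circle_sign (-1) * circle_sign u * circle_sign x"
      by (rule quadratic_char_chord[OF _ assms(1)])
    then show "quadratic_char (u - x) = d \<longleftrightarrow> circle_sign u = circle_sign (-1) * d * circle_sign x"
      using assms(2) circle_sign_cases[OF minus_one_mem_circle] circle_sign_cases[OF \<open>u \<in> circle\<close>]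
        circle_sign_cases[OF assms(1)] minus_one_neq_one
      by auto
  qed
  have "circle_sign x = 1 \<or> circle_sign x = -1" using circle_sign_cases assms(1) by blast
  show ?thesis
  proof (cases "d = circle_sign (-1)")
    case True
    then have "circle_sign (-1) * d = 1"
      using circle_sign_square[OF minus_one_mem_circle] by simp
    then have "{u\<in>circle. u \<noteq> x \<and> quadratic_char (u - x) = d}
        = {u\<in>circle. circle_sign u = circle_sign x} - {x}"
      unfolding class_eq by auto
    moreover have "card ({u\<in>circle. circle_sign u = circle_sign x} - {x}) = h - 1"
      using card_circle_sign_eq \<open>circle_sign x = 1 \<or> circle_sign x = -1\<close> assms(1)
      by (simp add: card_Diff_singleton)
    moreover have "real (h - 1) = real h - 1" using two_mult_h q_ge_3 by (simp add: of_nat_diff)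
    moreover have "(\<Sum>u\<in>{u\<in>circle. circle_sign u = circle_sign x} - {x}. circle_sign_real u)
        = (\<Sum>u\<in>{u\<in>circle. circle_sign u = circle_sign x} - {x}. circle_sign_real x)"
      by (rule sum.cong) (auto simp: circle_sign_real_def)
    ultimately show ?thesis using True by simp
  next
    case False
    then have "circle_sign (-1) * d = -1"
      using assms(2) circle_sign_cases[OF minus_one_mem_circle] minus_one_neq_one by auto
    moreover have "- circle_sign x \<noteq> circle_sign x"
      using \<open>circle_sign x = 1 \<or> circle_sign x = -1\<close> minus_one_neq_one by auto
    ultimately have "{u\<in>circle. u \<noteq> x \<and> quadratic_char (u - x) = d}
        = {u\<in>circle. circle_sign u = - circle_sign x}"
      unfolding class_eq by auto
    moreover have "card {u\<in>circle. circle_sign u = - circle_sign x} = h"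
      using card_circle_sign_eq \<open>circle_sign x = 1 \<or> circle_sign x = -1\<close> by auto
    ultimately show ?thesis
      using False circle_sign_real_opposite[OF assms(1)] by simp
  qed
qed

definition circle_function :: "'a \<Rightarrow> 'a \<Rightarrow> real" where
  "circle_function c y = (if y / c \<in> circle then circle_sign_real (y / c) else 0)"

context
  fixes c :: 'a
  assumes c_nonzero: "c \<noteq> 0"
begin

lemma supp_fun_circle_function: "supp_fun (circle_function c) = (\<lambda>u. c * u) ` circle"
proof (rule set_eqI)
  fix y
  show "y \<in> supp_fun (circle_function c) \<longleftrightarrow> y \<in> (\<lambda>u. c * u) ` circle"
    by (simp add: supp_fun_def circle_function_def circle_sign_real_nonzero mem_image_mult_iff[OF c_nonzero])
qed

lemma card_supp_fun_circle_function: "card (supp_fun (circle_function c)) = q + 1"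
  using c_nonzero by (simp add: supp_fun_circle_function card_image inj_on_def card_circle)

lemma circle_function_nonzero: "circle_function c \<noteq> (\<lambda>_. 0)"
proof
  assume "circle_function c = (\<lambda>_. 0)"
  then have "circle_function c c = 0" by simp
  then show False
    using c_nonzero one_mem_circle by (simp add: circle_function_def circle_sign_real_nonzero)
qed

lemma sum_paley_neighbours_circle_function:
  "(\<Sum>y\<in>{y. paley_adj x y}. circle_function c y)
    = (\<Sum>u\<in>{u\<in>circle. u \<noteq> x / c \<and> quadratic_char (u - x / c) = quadratic_char c}.
         circle_sign_real u)"
proof -
  have "(\<Sum>y\<in>{y. paley_adj x y}. circle_function c y)
      = (\<Sum>y\<in>{y. paley_adj x y \<and> y / c \<in> circle}. circle_sign_real (y / c))"
    unfolding circle_function_def by (simp add: sum.inter_filter[symmetric])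
  also have "{y. paley_adj x y \<and> y / c \<in> circle} = (\<lambda>u. c * u) ` {u\<in>circle. paley_adj x (c * u)}"
    by (rule set_eqI) (simp add: mem_image_mult_iff[OF c_nonzero] c_nonzero conj_commute)
  also have "(\<Sum>y\<in>(\<lambda>u. c * u) ` {u\<in>circle. paley_adj x (c * u)}. circle_sign_real (y / c))
      = (\<Sum>u\<in>{u\<in>circle. paley_adj x (c * u)}. circle_sign_real u)"
    using c_nonzero by (simp add: sum.reindex inj_on_def)
  also have "{u\<in>circle. paley_adj x (c * u)}
      = {u\<in>circle. u \<noteq> x / c \<and> quadratic_char (u - x / c) = quadratic_char c}"
  proof (intro Collect_cong conj_cong refl)
    fix u
    have "c * u - x = c * (u - x / c)" "c * u \<noteq> x \<longleftrightarrow> u \<noteq> x / c"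
      using c_nonzero by (auto simp: field_simps)
    then have "paley_adj x (c * u) \<longleftrightarrow> u \<noteq> x / c \<and> quadratic_char c * quadratic_char (u - x / c) = 1"
      by (simp only: paley_adj_iff_quadratic_char quadratic_char_mult)
    also have "quadratic_char c * quadratic_char (u - x / c) = 1
        \<longleftrightarrow> quadratic_char (u - x / c) = quadratic_char c"
      using quadratic_char_cases[OF odd_card_UNIV c_nonzero] by (auto simp: minus_equation_iff)
    finally show "paley_adj x (c * u) \<longleftrightarrow> u \<noteq> x / c \<and> quadratic_char (u - x / c) = quadratic_char c" .
  qed
  finally show ?thesis .
qed

lemma paley_eigenfunction_circle_function:
  "paley_eigenfunction (circle_function c)
     (if quadratic_char c = circle_sign (-1) then real h - 1 else - real h)"
proof -
  have qc_c: "quadratic_char c = 1 \<or> quadratic_char c = -1"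
    by (rule quadratic_char_cases[OF odd_card_UNIV c_nonzero])
  have "(\<Sum>y\<in>{y. paley_adj x y}. circle_function c y)
      = (if quadratic_char c = circle_sign (-1) then real h - 1 else - real h) * circle_function c x"
    for x
  proof (cases "x / c \<in> circle")
    case True
    then show ?thesis
      unfolding sum_paley_neighbours_circle_function
      using sum_circle_sign_real_class_on_circle[OF True qc_c] by (simp add: circle_function_def)
  next
    case False
    then have "{u\<in>circle. u \<noteq> x / c \<and> quadratic_char (u - x / c) = quadratic_char c}
        = {u\<in>circle. quadratic_char (u - x / c) = quadratic_char c}" by auto
    then show ?thesis
      unfolding sum_paley_neighbours_circle_function
      using sum_circle_sign_real_class_off_circle[OF False qc_c] by (simp add: circle_function_def False)
  qed
  then show ?thesis using circle_function_nonzero by (simp add: paley_eigenfunction_def)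
qed

end

lemma exists_quadratic_char_eq:
  assumes "s = 1 \<or> s = -1"
  shows "\<exists>c::'a. c \<noteq> 0 \<and> quadratic_char c = s"
proof (cases "s = 1")
  case True
  then show ?thesis by (intro exI[of _ 1]) (simp add: quadratic_char_def)
next
  case False
  then show ?thesis using assms exists_quadratic_nonresidue[OF odd_card_UNIV] by auto
qed

lemma exists_paley_eigenfunction_card_supp_eq:
  assumes "l = (-1 + real q) / 2 \<or> l = (-1 - real q) / 2"
  shows "\<exists>f::'a \<Rightarrow> real. paley_eigenfunction f l \<and> card (supp_fun f) = q + 1"
proof -
  have two_h: "2 * real h = real q + 1"
    using two_mult_h by (metis of_nat_add of_nat_mult of_nat_numeral of_nat_1)
  then have h_pos: "real h - 1 = (-1 + real q) / 2" by (simp add: field_simps)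
  from two_h have h_neg: "- real h = (-1 - real q) / 2" by (simp add: field_simps)
  have eps: "circle_sign (-1) = 1 \<or> circle_sign (-1) = -1"
    by (rule circle_sign_cases[OF minus_one_mem_circle])
  then have "- circle_sign (-1) \<noteq> circle_sign (-1)" using minus_one_neq_one by auto
  then obtain s where "s = 1 \<or> s = -1"
    and l: "l = (if s = circle_sign (-1) then real h - 1 else - real h)"
    using assms eps h_pos h_neg by (elim disjE) (fastforce intro: that)+
  then obtain c :: 'a where "c \<noteq> 0" "quadratic_char c = s" using exists_quadratic_char_eq by blast
  then have "paley_eigenfunction (circle_function c) l" "card (supp_fun (circle_function c)) = q + 1"
    using paley_eigenfunction_circle_function[of c] card_supp_fun_circle_function[of c] l by simp_all
  then show ?thesis by blast
qed

lemma card_supp_paley_eigenfunction_ge: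
  fixes f :: "'a \<Rightarrow> real"
  assumes "paley_eigenfunction f l" and l: "l = (-1 + real q) / 2 \<or> l = (-1 - real q) / 2"
  shows "q + 1 \<le> card (supp_fun f)"
proof -
  have "3 \<le> real q" using q_ge_3 by simp
  have "real q * real q - 1 \<le> 2 * real (card (nonzero_squares :: 'a set))"
    using card_nonzero_squares_ge[where 'a='a] q_ge_3
    by (simp add: card_UNIV_eq of_nat_diff flip: of_nat_mult)
  moreover have "3 * real q \<le> real q * real q" using \<open>3 \<le> real q\<close> by (intro mult_right_mono) auto
  moreover have two_l: "2 * l = real q - 1 \<or> 2 * l = - real q - 1"
    using l by (auto simp: field_simps)
  ultimately have "l \<noteq> real (card (nonzero_squares :: 'a set))"
    using \<open>3 \<le> real q\<close> by (elim disjE) linarith+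
  then have "\<bar>l\<bar> + \<bar>1 + l\<bar> + 1 \<le> real (card (supp_fun f))"
    using paley_eigenfunction_card_supp_ge[OF assms(1)] by blast
  moreover have "\<bar>l\<bar> + \<bar>1 + l\<bar> + 1 = real q + 1"
    using two_l \<open>3 \<le> real q\<close> by (elim disjE) (auto simp: abs_if)
  ultimately show ?thesis by simp
qed

end

theorem mainTheorem7:
  fixes q :: nat and l :: real
  assumes "odd q"
    and "\<exists>p k. prime p \<and> k \<ge> 1 \<and> q = p ^ k"
    and "card (UNIV :: 'a::{field,finite} set) = q ^ 2"
    and "l = (-1 + real q) / 2 \<or> l = (-1 - real q) / 2"
  shows "(\<exists>f :: 'a \<Rightarrow> real. paley_eigenfunction f l \<and> card (supp_fun f) = q + 1)
       \<and> (\<forall>f :: 'a \<Rightarrow> real. paley_eigenfunction f l \<longrightarrow> q + 1 \<le> card (supp_fun f))"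
proof -
  interpret paley_square_field q "TYPE('a)"
    using assms(1-3) by unfold_locales blast+
  show ?thesis
    using exists_paley_eigenfunction_card_supp_eq card_supp_paley_eigenfunction_ge assms(4) by blast
qed

end
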